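(* Fix $L>0$. There exists $C>0$ such that for all $u^0\in H^6(0,L)$ with $u^0,Pu^0,P^2u^0\in\mathrm{Dom}(P)$, all $\delta t\in(0,1)$ and $J\ge2$ with $\delta t/\delta x^2\le1/2$, and all $n\ge1$, $$\Big\|\delta t\sum_{k=0}^{n-1}(\mathrm{Id}+\delta t\,\mathsf P_\delta)^{n-1-k}\mathcal L_\delta u(k\delta t,\cdot)\Big\|_{\ell^2}\le C\,\delta x\sum_{p=1}^\infty|\alpha_p|p^4,$$ where $u$ is the solution of $\partial_tu=Pu$, $u(0)=u^0$.
   Context: $P=\partial_x^2$ with homogeneous Neumann conditions on $(0,L)$, $\mathrm{Dom}(P)=\{u\in L^2:\partial_x^2u\in L^2,\ \partial_xu(0)=\partial_xu(L)=0\}$; $c_0=1$, $c_p(x)=\sqrt2\cos(p\pi x/L)$, $\alpha_p=\frac1L\int_0^Lu^0c_p\,dx$, $u(t)=\sum_{p\ge0}\alpha_pe^{-p^2\pi^2t/L^2}c_p$. For $J\ge2$: $\delta x=L/(J-1)$, $x_j=j\delta x$, $\|\mathsf v\|_{\ell^2}^2=\frac1J\sum_j\mathsf v_j^2$, $\Pi_{\delta x}w=(w(x_j))_{0\le j\le J-1}$, $\mathsf P_\delta=\frac1{\delta x^2}\times$ the tridiagonal $J\times J$ matrix with diagonal $(-1,-2,\dots,-2,-1)$ and off-diagonals $1$. For smooth $w$, $\mathcal L_\delta w=\Pi_{\delta x}(\partial_x^2w)-\mathsf P_\delta\Pi_{\delta x}w$. *)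

theory Defs
  imports "HOL-Analysis.Analysis"
begin

text \<open>Sobolev space H^6(0,L) in one dimension: f (its continuous representative)
  has successive derivatives g 1, ..., g 5 that are absolutely continuous
  (indefinite integrals of the next one) and the 6th derivative g 6 lies in L^2(0,L).
  g k is the k-th (weak) derivative of f on [0,L].\<close>
definition H6_derivs :: "real \<Rightarrow> (real \<Rightarrow> real) \<Rightarrow> (nat \<Rightarrow> real \<Rightarrow> real) \<Rightarrow> bool" where
  "H6_derivs L f g \<longleftrightarrow>
     (\<forall>x\<in>{0..L}. g 0 x = f x) \<and>
     (\<forall>k<6. \<forall>x\<in>{0..L}. (g (Suc k) has_integral (g k x - g k 0)) {0..x}) \<and>
     (\<lambda>x. (g 6 x)\<^sup>2) integrable_on {0..L}"

text \<open>u0 in H^6(0,L) with u0, P u0, P^2 u0 in Dom(P) (homogeneous Neumann conditions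
  on u0, u0'' and u0'''').\<close>
definition admissible_data :: "real \<Rightarrow> (real \<Rightarrow> real) \<Rightarrow> bool" where
  "admissible_data L u0 \<longleftrightarrow>
     (\<exists>g. H6_derivs L u0 g \<and>
          g 1 0 = 0 \<and> g 1 L = 0 \<and>
          g 3 0 = 0 \<and> g 3 L = 0 \<and>
          g 5 0 = 0 \<and> g 5 L = 0)"

definition cfun :: "real \<Rightarrow> nat \<Rightarrow> real \<Rightarrow> real" where
  "cfun L p x = (if p = 0 then 1 else sqrt 2 * cos (real p * pi * x / L))"

definition alpha :: "real \<Rightarrow> (real \<Rightarrow> real) \<Rightarrow> nat \<Rightarrow> real" where
  "alpha L u0 p = (1 / L) * integral {0..L} (\<lambda>x. u0 x * cfun L p x)"

definition sol :: "real \<Rightarrow> (real \<Rightarrow> real) \<Rightarrow> real \<Rightarrow> real \<Rightarrow> real" where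
  "sol L u0 t x = (\<Sum>p. alpha L u0 p * exp (- (real p)\<^sup>2 * pi\<^sup>2 * t / L\<^sup>2) * cfun L p x)"

definition dx :: "real \<Rightarrow> nat \<Rightarrow> real" where
  "dx L J = L / (real J - 1)"

text \<open>Grid vectors are functions nat \<Rightarrow> real, only indices 0..J-1 matter.\<close>
definition l2norm :: "nat \<Rightarrow> (nat \<Rightarrow> real) \<Rightarrow> real" where
  "l2norm J v = sqrt ((1 / real J) * (\<Sum>j<J. (v j)\<^sup>2))"

definition Pi_grid :: "real \<Rightarrow> nat \<Rightarrow> (real \<Rightarrow> real) \<Rightarrow> nat \<Rightarrow> real" where
  "Pi_grid L J w = (\<lambda>j. w (real j * dx L J))"

definition Pdelta :: "real \<Rightarrow> nat \<Rightarrow> (nat \<Rightarrow> real) \<Rightarrow> nat \<Rightarrow> real" where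
  "Pdelta L J v = (\<lambda>j. (1 / (dx L J)\<^sup>2) *
      ((if j = 0 \<or> j = J - 1 then -1 else -2) * v j
       + (if j > 0 then v (j - 1) else 0)
       + (if j + 1 < J then v (j + 1) else 0)))"

definition scheme_op :: "real \<Rightarrow> nat \<Rightarrow> real \<Rightarrow> (nat \<Rightarrow> real) \<Rightarrow> nat \<Rightarrow> real" where
  "scheme_op L J dt v = (\<lambda>j. v j + dt * Pdelta L J v j)"

definition Ldelta :: "real \<Rightarrow> nat \<Rightarrow> (real \<Rightarrow> real) \<Rightarrow> nat \<Rightarrow> real" where
  "Ldelta L J w = (\<lambda>j. Pi_grid L J (deriv (deriv w)) j - Pdelta L J (Pi_grid L J w) j)"

end

theory Submission
  imports Defs
begin

text \<open>Expanding $u$ in the cosine basis, the accumulated consistency error is the superposition,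
  with weights $\alpha_p$, of the errors produced by the single modes $e^{-\mu_p t} c_p$,
  $\mu_p = (p\pi/L)^2$. For one mode, compare the samples $\Pi_{\delta x} c_p$ with the exact
  eigenvector $y_p$ of $\mathsf P_\delta$ (eigenvalue $-\nu_p$): with $d_p = y_p - \Pi_{\delta x} c_p$,
  $\mathcal L_\delta c_p = (\nu_p - \mu_p) y_p + \mu_p d_p + \mathsf P_\delta d_p$, where
  $\|d_p\| = O(p\,\delta x)$ and $0 \le \mu_p - \nu_p = O(p^4 \delta x)$. Under the CFL condition
  $\mathrm{Id} + \delta t\,\mathsf P_\delta$ is an $\ell^2$ contraction, so the first two terms
  contribute at most $O(p^4\delta x)$ times $\sum_k \delta t\, e^{-\mu_p k \delta t} \le 1 + L^2/\pi^2$.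
  The last term is not small, but
  $\delta t\,\mathsf P_\delta d_p = (\mathrm{Id} + \delta t\,\mathsf P_\delta) d_p - d_p$ telescopes:
  Abel summation against the decreasing weights $e^{-\mu_p k \delta t}$ bounds it by $2\|d_p\|$.
  Summing over $p$ requires $\sum_p |\alpha_p| p^4 < \infty$, which comes from the $H^6$
  regularity: integrating by parts five times gives $|\alpha_p| p^4 = O(|\beta_p|/p)$ with
  $\beta_p$ the sine coefficients of $u^{(5)}$, and Bessel's inequality bounds
  $\sum_p \beta_p^2$.\<close>

section \<open>The discrete $\ell^2$ norm\<close>

lemma l2norm_nonneg: "0 \<le> l2norm J v"
  unfolding l2norm_def by (intro real_sqrt_ge_zero mult_nonneg_nonneg sum_nonneg) auto

lemma l2norm_cong: "(\<And>j. j < J \<Longrightarrow> v j = w j) \<Longrightarrow> l2norm J v = l2norm J w"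
  unfolding l2norm_def by (metis (no_types, lifting) lessThan_iff sum.cong)

lemma l2norm_eq_L2_set: "l2norm J v = sqrt (1 / real J) * L2_set v {..<J}"
  unfolding l2norm_def L2_set_def by (simp add: real_sqrt_divide)

lemma l2norm_add_le: "l2norm J (\<lambda>j. v j + w j) \<le> l2norm J v + l2norm J w"
  using mult_left_mono[OF L2_set_triangle_ineq[of v w "{..<J}"], of "sqrt (1 / real J)"]
  unfolding l2norm_eq_L2_set by (simp add: distrib_left)

lemma l2norm_scale: "l2norm J (\<lambda>j. c * v j) = \<bar>c\<bar> * l2norm J v"
proof -
  have "(\<Sum>j<J. (c * v j)\<^sup>2) = c\<^sup>2 * (\<Sum>j<J. (v j)\<^sup>2)"
    by (simp add: sum_distrib_left power_mult_distrib)
  then show ?thesis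
    unfolding l2norm_def by (simp only: mult.left_commute[of "1 / real J"] real_sqrt_mult real_sqrt_abs)
qed

lemma l2norm_diff_le: "l2norm J (\<lambda>j. v j - w j) \<le> l2norm J v + l2norm J w"
  using l2norm_add_le[of J v "\<lambda>j. - w j"] l2norm_scale[of J "-1" w] by simp

lemma l2norm_sum_le:
  "finite K \<Longrightarrow> l2norm J (\<lambda>j. \<Sum>k\<in>K. f k j) \<le> (\<Sum>k\<in>K. l2norm J (f k))"
proof (induction K rule: finite_induct)
  case empty
  then show ?case by (simp add: l2norm_def)
next
  case (insert k K)
  then show ?case
    using l2norm_add_le[of J "f k" "\<lambda>j. \<Sum>k\<in>K. f k j"] by simp
qed

lemma l2norm_le_sup:
  assumes "0 < J" and "\<And>j. j < J \<Longrightarrow> \<bar>v j\<bar> \<le> M"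
  shows "l2norm J v \<le> M"
proof -
  have "0 \<le> M" using assms(2)[of 0] assms(1) by linarith
  have "(\<Sum>j<J. (v j)\<^sup>2) \<le> (\<Sum>j<J. M\<^sup>2)"
    using assms(2) by (intro sum_mono) (metis abs_ge_zero lessThan_iff power2_abs power_mono)
  then have "(1 / real J) * (\<Sum>j<J. (v j)\<^sup>2) \<le> M\<^sup>2"
    using assms(1) by (simp add: field_simps)
  then show ?thesis
    unfolding l2norm_def using \<open>0 \<le> M\<close> real_le_lsqrt by blast
qed

lemma l2norm_suminf_le:
  assumes f: "\<And>j. (\<lambda>p. f p j) sums F j" and b: "\<And>p. l2norm J (f p) \<le> b p"
    and "summable b"
  shows "l2norm J F \<le> suminf b"
proof (rule LIMSEQ_le_const2)
  show "(\<lambda>N. l2norm J (\<lambda>j. \<Sum>p<N. f p j)) \<longlonglongrightarrow> l2norm J F"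
    unfolding l2norm_def using f[unfolded sums_def] by (intro tendsto_intros) auto
  have "0 \<le> b p" for p
    using b[of p] l2norm_nonneg[of J "f p"] by linarith
  then have "l2norm J (\<lambda>j. \<Sum>p<N. f p j) \<le> suminf b" for N
    using l2norm_sum_le[of "{..<N}" J f] b sum_mono[of "{..<N}" "\<lambda>p. l2norm J (f p)" b]
      sum_le_suminf[OF \<open>summable b\<close>, of "{..<N}"] by fastforce
  then show "\<exists>N. \<forall>n\<ge>N. l2norm J (\<lambda>j. \<Sum>p<n. f p j) \<le> suminf b" by blast
qed

lemma l2norm_abel_sum_le:
  assumes X: "\<And>m. l2norm J (X m) \<le> M" and "0 \<le> c 0" and inc: "\<And>m. c m \<le> c (Suc m)"
  shows "l2norm J (\<lambda>j. \<Sum>m<Suc n. c m * (X (Suc m) j - X m j)) \<le> 2 * c n * M"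
proof -
  have "c 0 \<le> c n" using inc by (simp add: lift_Suc_mono_le)
  have summation_by_parts: "(\<Sum>m<Suc n. c m * (X (Suc m) j - X m j)) =
      (c n * X (Suc n) j - c 0 * X 0 j) - (\<Sum>m<n. (c (Suc m) - c m) * X (Suc m) j)" for j
    by (induction n) (simp_all add: algebra_simps)
  have "l2norm J (\<lambda>j. \<Sum>m<Suc n. c m * (X (Suc m) j - X m j))
      \<le> l2norm J (\<lambda>j. c n * X (Suc n) j - c 0 * X 0 j)
        + l2norm J (\<lambda>j. \<Sum>m<n. (c (Suc m) - c m) * X (Suc m) j)"
    unfolding summation_by_parts by (rule l2norm_diff_le)
  also have "\<dots> \<le> (l2norm J (\<lambda>j. c n * X (Suc n) j) + l2norm J (\<lambda>j. c 0 * X 0 j))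
      + (\<Sum>m<n. l2norm J (\<lambda>j. (c (Suc m) - c m) * X (Suc m) j))"
    by (intro add_mono l2norm_diff_le l2norm_sum_le) simp
  also have "\<dots> = (c n * l2norm J (X (Suc n)) + c 0 * l2norm J (X 0))
      + (\<Sum>m<n. (c (Suc m) - c m) * l2norm J (X (Suc m)))"
    using \<open>0 \<le> c 0\<close> \<open>c 0 \<le> c n\<close> inc by (simp add: l2norm_scale)
  also have "\<dots> \<le> (c n * M + c 0 * M) + (\<Sum>m<n. (c (Suc m) - c m) * M)"
    using \<open>0 \<le> c 0\<close> \<open>c 0 \<le> c n\<close> inc X by (intro add_mono sum_mono mult_left_mono) auto
  also have "(\<Sum>m<n. (c (Suc m) - c m) * M) = (c n - c 0) * M"
    by (simp add: sum_distrib_right[symmetric] sum_lessThan_telescope)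
  finally show ?thesis by (simp add: algebra_simps)
qed

section \<open>The explicit Euler scheme\<close>

lemma Pdelta_eq:
  "Pdelta L J v j = ((if j = 0 \<or> j = J - 1 then -1 else -2) * v j
     + (if 0 < j then 1 else 0) * v (j - 1) + (if j + 1 < J then 1 else 0) * v (j + 1)) / (dx L J)\<^sup>2"
  unfolding Pdelta_def by simp

lemma Pdelta_lincomb:
  "Pdelta L J (\<lambda>i. a * v i + b * w i) j = a * Pdelta L J v j + b * Pdelta L J w j"
  unfolding Pdelta_eq by (simp add: algebra_simps add_divide_distrib)

lemma Pdelta_scale: "Pdelta L J (\<lambda>i. a * v i) j = a * Pdelta L J v j"
  using Pdelta_lincomb[where b=0 and w=v] by simp

lemma Pdelta_diff: "Pdelta L J (\<lambda>i. v i - w i) j = Pdelta L J v j - Pdelta L J w j"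
  using Pdelta_lincomb[where a=1 and b="-1"] by simp

lemma sums_Pdelta:
  "(\<And>i. (\<lambda>p. v p i) sums V i) \<Longrightarrow> (\<lambda>p. Pdelta L J (v p) j) sums Pdelta L J V j"
  unfolding Pdelta_eq by (intro sums_add sums_mult sums_divide) auto

lemma scheme_op_lincomb:
  "scheme_op L J dt (\<lambda>i. a * v i + b * w i) = (\<lambda>j. a * scheme_op L J dt v j + b * scheme_op L J dt w j)"
  unfolding scheme_op_def Pdelta_lincomb by (simp add: algebra_simps)

lemma funpow_scheme_op_lincomb:
  "(scheme_op L J dt ^^ m) (\<lambda>i. a * v i + b * w i)
     = (\<lambda>j. a * (scheme_op L J dt ^^ m) v j + b * (scheme_op L J dt ^^ m) w j)"
  by (induction m) (simp_all add: scheme_op_lincomb)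

lemma funpow_scheme_op_scale:
  "(scheme_op L J dt ^^ m) (\<lambda>i. a * v i) = (\<lambda>j. a * (scheme_op L J dt ^^ m) v j)"
  using funpow_scheme_op_lincomb[where b=0 and w=v] by simp

lemma funpow_scheme_op_add:
  "(scheme_op L J dt ^^ m) (\<lambda>i. v i + w i) = (\<lambda>j. (scheme_op L J dt ^^ m) v j + (scheme_op L J dt ^^ m) w j)"
  using funpow_scheme_op_lincomb[where a=1 and b=1] by simp

lemma funpow_scheme_op_diff:
  "(scheme_op L J dt ^^ m) (\<lambda>i. v i - w i) = (\<lambda>j. (scheme_op L J dt ^^ m) v j - (scheme_op L J dt ^^ m) w j)"
  using funpow_scheme_op_lincomb[where a=1 and b="-1"] by simp

lemma funpow_scheme_op_cong:
  assumes "\<And>i. i < J \<Longrightarrow> v i = w i" and "j < J"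
  shows "(scheme_op L J dt ^^ m) v j = (scheme_op L J dt ^^ m) w j"
  using assms(2)
proof (induction m arbitrary: j)
  case 0
  then show ?case using assms(1) by simp
next
  case (Suc m)
  then have "0 < j \<Longrightarrow> (scheme_op L J dt ^^ m) v (j - 1) = (scheme_op L J dt ^^ m) w (j - 1)"
    by simp
  with Suc show ?case
    by (simp add: scheme_op_def Pdelta_eq)
qed

lemma sums_funpow_scheme_op:
  assumes "\<And>i. (\<lambda>p. v p i) sums V i"
  shows "(\<lambda>p. (scheme_op L J dt ^^ m) (v p) j) sums (scheme_op L J dt ^^ m) V j"
proof (induction m arbitrary: j)
  case 0
  then show ?case using assms by simp
next
  case (Suc m)
  then show ?case
    unfolding funpow.simps comp_def scheme_op_def by (intro sums_add sums_mult sums_Pdelta)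
qed

lemma square_convex_comb3_le:
  fixes a b c w1 w2 :: real
  assumes "0 \<le> w1" "0 \<le> w2" "w1 + w2 \<le> 1"
  shows "((1 - w1 - w2) * a + w1 * b + w2 * c)\<^sup>2 \<le> (1 - w1 - w2) * a\<^sup>2 + w1 * b\<^sup>2 + w2 * c\<^sup>2"
proof -
  have "(1 - w1 - w2) * a\<^sup>2 + w1 * b\<^sup>2 + w2 * c\<^sup>2 - ((1 - w1 - w2) * a + w1 * b + w2 * c)\<^sup>2
      = (1 - w1 - w2) * w1 * (a - b)\<^sup>2 + (1 - w1 - w2) * w2 * (a - c)\<^sup>2 + w1 * w2 * (b - c)\<^sup>2"
    by (simp add: power2_eq_square algebra_simps)
  moreover have "0 \<le> (1 - w1 - w2) * w1 * (a - b)\<^sup>2 + (1 - w1 - w2) * w2 * (a - c)\<^sup>2 + w1 * w2 * (b - c)\<^sup>2"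
    using assms by (intro add_nonneg_nonneg mult_nonneg_nonneg zero_le_power2) auto
  ultimately show ?thesis by linarith
qed

text \<open>Under the CFL condition each row of $\mathrm{Id} + \delta t\,\mathsf P_\delta$ is a convex
  combination of neighbouring values, so squaring is controlled by convexity and the
  neighbour terms telescope away.\<close>

lemma sum_square_scheme_op_le:
  assumes J: "2 \<le> J" and "0 \<le> dt" and cfl: "dt / (dx L J)\<^sup>2 \<le> 1 / 2"
  shows "(\<Sum>j<J. (scheme_op L J dt v j)\<^sup>2) \<le> (\<Sum>j<J. (v j)\<^sup>2)"
proof -
  define r where "r = dt / (dx L J)\<^sup>2"
  define left :: "nat \<Rightarrow> real" where "left j = (if 0 < j then r else 0)" for j
  define right :: "nat \<Rightarrow> real" where "right j = (if j + 1 < J then r else 0)" for j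
  have "0 \<le> r" "r \<le> 1 / 2" using assms by (auto simp: r_def)
  have row: "scheme_op L J dt v j = (1 - left j - right j) * v j + left j * v (j - 1) + right j * v (j + 1)"
    if "j < J" for j
    using that J unfolding scheme_op_def Pdelta_eq left_def right_def r_def
    by (auto simp: algebra_simps add_divide_distrib diff_divide_distrib)
  have row_sq: "(scheme_op L J dt v j)\<^sup>2
      \<le> (v j)\<^sup>2 + left j * ((v (j - 1))\<^sup>2 - (v j)\<^sup>2) + right j * ((v (j + 1))\<^sup>2 - (v j)\<^sup>2)"
    if "j < J" for j
    using square_convex_comb3_le[of "left j" "right j" "v j" "v (j - 1)" "v (j + 1)"]
      \<open>0 \<le> r\<close> \<open>r \<le> 1 / 2\<close> unfolding row[OF that]
    by (simp add: left_def right_def algebra_simps)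
  obtain M where M: "J = Suc M" using J by (cases J) auto
  have telescope_left: "(\<Sum>j<J. left j * ((v (j - 1))\<^sup>2 - (v j)\<^sup>2)) = r * (\<Sum>j<M. (v j)\<^sup>2 - (v (Suc j))\<^sup>2)"
    unfolding M sum.lessThan_Suc_shift by (simp add: left_def sum_distrib_left)
  have telescope_right: "(\<Sum>j<J. right j * ((v (j + 1))\<^sup>2 - (v j)\<^sup>2)) = r * (\<Sum>j<M. (v (Suc j))\<^sup>2 - (v j)\<^sup>2)"
    unfolding M sum.lessThan_Suc by (auto simp: right_def M sum_distrib_left intro!: sum.cong)
  have "(\<Sum>j<J. (scheme_op L J dt v j)\<^sup>2)
      \<le> (\<Sum>j<J. (v j)\<^sup>2 + left j * ((v (j - 1))\<^sup>2 - (v j)\<^sup>2) + right j * ((v (j + 1))\<^sup>2 - (v j)\<^sup>2))"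
    by (intro sum_mono row_sq) auto
  also have "\<dots> = (\<Sum>j<J. (v j)\<^sup>2)"
    unfolding sum.distrib telescope_left telescope_right
    by (simp add: sum_subtractf algebra_simps)
  finally show ?thesis .
qed

lemma l2norm_funpow_scheme_op_le:
  assumes "2 \<le> J" and "0 \<le> dt" and "dt / (dx L J)\<^sup>2 \<le> 1 / 2"
  shows "l2norm J ((scheme_op L J dt ^^ m) v) \<le> l2norm J v"
proof (induction m)
  case (Suc m)
  have "l2norm J (scheme_op L J dt ((scheme_op L J dt ^^ m) v)) \<le> l2norm J ((scheme_op L J dt ^^ m) v)"
    unfolding l2norm_def
    using sum_square_scheme_op_le[OF assms] by (intro real_sqrt_le_mono mult_left_mono) auto
  with Suc show ?case by simp
qed simp

lemma funpow_scheme_op_Pdelta: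
  "dt * (scheme_op L J dt ^^ m) (Pdelta L J v) j
     = (scheme_op L J dt ^^ Suc m) v j - (scheme_op L J dt ^^ m) v j"
proof -
  have "(\<lambda>i. scheme_op L J dt v i - v i) = (\<lambda>i. dt * Pdelta L J v i)"
    by (simp add: scheme_op_def)
  then show ?thesis
    unfolding funpow_Suc_right comp_def by (metis funpow_scheme_op_diff funpow_scheme_op_scale)
qed

definition duhamel :: "real \<Rightarrow> nat \<Rightarrow> real \<Rightarrow> nat \<Rightarrow> (nat \<Rightarrow> nat \<Rightarrow> real) \<Rightarrow> nat \<Rightarrow> real" where
  "duhamel L J dt n E = (\<lambda>j. dt * (\<Sum>k<n. (scheme_op L J dt ^^ (n - 1 - k)) (E k) j))"

lemma sums_duhamel:
  "(\<And>k i. (\<lambda>p. E p k i) sums F k i) \<Longrightarrow> (\<lambda>p. duhamel L J dt n (E p) j) sums duhamel L J dt n F j"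
  unfolding duhamel_def by (intro sums_mult sums_sum sums_funpow_scheme_op)

lemma duhamel_scale: "duhamel L J dt n (\<lambda>k i. a * E k i) j = a * duhamel L J dt n E j"
  unfolding duhamel_def funpow_scheme_op_scale by (simp add: sum_distrib_left mult_ac)

lemma l2norm_duhamel_le:
  assumes "2 \<le> J" and "0 \<le> dt" and "dt / (dx L J)\<^sup>2 \<le> 1 / 2" and "\<And>k. 0 \<le> w k"
  shows "l2norm J (duhamel L J dt n (\<lambda>k i. w k * v i)) \<le> (\<Sum>k<n. dt * w k) * l2norm J v"
proof -
  have "l2norm J (duhamel L J dt n (\<lambda>k i. w k * v i))
      = l2norm J (\<lambda>j. \<Sum>k<n. (dt * w k) * (scheme_op L J dt ^^ (n - 1 - k)) v j)"
    unfolding duhamel_def funpow_scheme_op_scale by (simp add: sum_distrib_left mult.assoc)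
  also have "\<dots> \<le> (\<Sum>k<n. (dt * w k) * l2norm J ((scheme_op L J dt ^^ (n - 1 - k)) v))"
    using l2norm_sum_le[of "{..<n}" J "\<lambda>k j. (dt * w k) * (scheme_op L J dt ^^ (n - 1 - k)) v j"] assms(2,4)
    by (simp add: l2norm_scale abs_mult)
  also have "\<dots> \<le> (\<Sum>k<n. (dt * w k) * l2norm J v)"
    using assms by (intro sum_mono mult_left_mono l2norm_funpow_scheme_op_le) auto
  finally show ?thesis by (simp add: sum_distrib_right)
qed

section \<open>Continuous and discrete cosine modes\<close>

lemma abs_cos_diff_le: "\<bar>cos a - cos b\<bar> \<le> \<bar>a - b :: real\<bar>"
proof -
  have "\<bar>cos a - cos b\<bar> = 2 * \<bar>sin ((a + b) / 2)\<bar> * \<bar>sin ((b - a) / 2)\<bar>"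
    by (simp add: cos_diff_cos abs_mult)
  also have "\<dots> \<le> 2 * 1 * \<bar>(b - a) / 2\<bar>"
    by (intro mult_mono abs_sin_x_le_abs_x) auto
  finally show ?thesis by simp
qed

lemma one_minus_cos_le: "1 - cos x \<le> (x :: real)\<^sup>2 / 2"
proof -
  have "(sin (x / 2))\<^sup>2 \<le> (x / 2)\<^sup>2"
    using abs_sin_x_le_abs_x[of "x / 2"] by (metis abs_ge_zero power2_abs power_mono)
  then show ?thesis
    using cos_double_sin[of "x / 2"] by (simp add: power_divide)
qed

lemma diff_sin_le_cube:
  assumes "0 \<le> (x :: real)"
  shows "x - sin x \<le> x ^ 3 / 6"
proof -
  let ?f = "\<lambda>u. u ^ 3 / 6 - u + sin u"
  have "?f 0 \<le> ?f x"
  proof (rule DERIV_nonneg_imp_nondecreasing[OF assms])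
    fix u
    have "(?f has_real_derivative (u\<^sup>2 / 2 - 1 + cos u)) (at u)"
      by (auto intro!: derivative_eq_intros simp: power2_eq_square)
    then show "\<exists>y. (?f has_real_derivative y) (at u) \<and> 0 \<le> y"
      using one_minus_cos_le[of u] by force
  qed
  then show ?thesis by simp
qed

lemma square_diff_4_sin_half_square_bounds:
  assumes "0 \<le> (t :: real)"
  shows "0 \<le> t\<^sup>2 - 4 * (sin (t / 2))\<^sup>2" and "t\<^sup>2 - 4 * (sin (t / 2))\<^sup>2 \<le> t ^ 4 / 12"
proof -
  define x where "x = t / 2"
  have "0 \<le> x" using assms by (simp add: x_def)
  have sin_le: "\<bar>sin x\<bar> \<le> x" using abs_sin_x_le_abs_x[of x] \<open>0 \<le> x\<close> by simp
  have factor: "t\<^sup>2 - 4 * (sin (t / 2))\<^sup>2 = 4 * ((x - sin x) * (x + sin x))"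
    by (simp add: x_def power2_eq_square algebra_simps)
  show "0 \<le> t\<^sup>2 - 4 * (sin (t / 2))\<^sup>2"
    unfolding factor using sin_le by (simp add: abs_le_iff)
  have "(x - sin x) * (x + sin x) \<le> (x ^ 3 / 6) * (2 * x)"
    using sin_le diff_sin_le_cube[OF \<open>0 \<le> x\<close>] by (intro mult_mono) (auto simp: abs_le_iff)
  also have "4 * \<dots> = t ^ 4 / 12"
    by (simp add: x_def power_divide eval_nat_numeral)
  finally show "t\<^sup>2 - 4 * (sin (t / 2))\<^sup>2 \<le> t ^ 4 / 12"
    unfolding factor by simp
qed

lemma dx_pos: "0 < L \<Longrightarrow> 2 \<le> J \<Longrightarrow> 0 < dx L J"
  unfolding dx_def by simp

lemma dx_le: "0 < L \<Longrightarrow> 2 \<le> J \<Longrightarrow> dx L J \<le> L"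
  unfolding dx_def by (simp add: field_simps)

definition heat_eigenvalue :: "real \<Rightarrow> nat \<Rightarrow> real" where
  "heat_eigenvalue L p = (real p * pi / L)\<^sup>2"

lemma heat_eigenvalue_nonneg: "0 \<le> heat_eigenvalue L p"
  unfolding heat_eigenvalue_def by simp

lemma exp_heat_eigenvalue: "exp (- (real p)\<^sup>2 * pi\<^sup>2 * t / L\<^sup>2) = exp (- heat_eigenvalue L p * t)"
  unfolding heat_eigenvalue_def by (simp add: power_divide power_mult_distrib)

definition dcfun :: "real \<Rightarrow> nat \<Rightarrow> real \<Rightarrow> real" where
  "dcfun L p x = - sqrt 2 * (real p * pi / L) * sin (real p * pi * x / L)"

lemma abs_cfun_le: "\<bar>cfun L p x\<bar> \<le> sqrt 2"
  unfolding cfun_def by (auto simp: abs_mult)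

lemma abs_dcfun_le: "\<bar>dcfun L p x\<bar> \<le> sqrt 2 * \<bar>real p * pi / L\<bar>"
  using mult_left_le[OF abs_sin_le_one[of "real p * pi * x / L"], of "sqrt 2 * \<bar>real p * pi / L\<bar>"]
  by (simp add: dcfun_def abs_mult)

lemma has_field_derivative_cfun: "L \<noteq> 0 \<Longrightarrow> (cfun L p has_field_derivative dcfun L p x) (at x)"
  unfolding cfun_def[abs_def] dcfun_def
  by (cases "p = 0") (auto intro!: derivative_eq_intros simp: algebra_simps)

lemma has_field_derivative_dcfun:
  "L \<noteq> 0 \<Longrightarrow> (dcfun L p has_field_derivative - heat_eigenvalue L p * cfun L p x) (at x)"
  unfolding cfun_def dcfun_def[abs_def] heat_eigenvalue_def
  by (cases "p = 0") (auto intro!: derivative_eq_intros simp: algebra_simps power2_eq_square)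

lemma deriv2_cfun: "L \<noteq> 0 \<Longrightarrow> deriv (deriv (cfun L p)) x = - heat_eigenvalue L p * cfun L p x"
  using has_field_derivative_cfun has_field_derivative_dcfun
  by (metis DERIV_imp_deriv ext)

lemma Ldelta_cfun:
  "L \<noteq> 0 \<Longrightarrow> Ldelta L J (cfun L p) j
     = - heat_eigenvalue L p * cfun L p (real j * dx L J) - Pdelta L J (Pi_grid L J (cfun L p)) j"
  unfolding Ldelta_def Pi_grid_def by (simp add: deriv2_cfun)

text \<open>The discrete modes are sampled at the cell centres $(j + 1/2) L/J$ rather than at the
  nodes $x_j$: this makes them exact eigenvectors of $\mathsf P_\delta$, the reflections at
  $-1/2$ and $J - 1/2$ accounting for the corner entries $-1$.\<close>

definition disc_mode :: "nat \<Rightarrow> nat \<Rightarrow> nat \<Rightarrow> real" where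
  "disc_mode J p = (\<lambda>j. sqrt 2 * cos (real p * pi * (real j + 1 / 2) / real J))"

definition disc_eigenvalue :: "real \<Rightarrow> nat \<Rightarrow> nat \<Rightarrow> real" where
  "disc_eigenvalue L J p = 4 * (sin (real p * pi / real J / 2))\<^sup>2 / (dx L J)\<^sup>2"

lemma Pdelta_reflected_recurrence:
  fixes Y :: "real \<Rightarrow> real"
  assumes J: "2 \<le> J" and j: "j < J"
    and neighbours: "\<And>x. Y (x - 1) + Y (x + 1) = c * Y x"
    and reflect: "Y (-1) = Y 0" "Y (real J) = Y (real J - 1)"
  shows "Pdelta L J (\<lambda>i. Y (real i)) j = (c - 2) / (dx L J)\<^sup>2 * Y (real j)"
proof -
  have "(if j = 0 \<or> j = J - 1 then -1 else -2) * Y (real j)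
      + (if 0 < j then 1 else 0) * Y (real (j - 1)) + (if j + 1 < J then 1 else 0) * Y (real (j + 1))
      = (c - 2) * Y (real j)"
  proof (cases "j = 0")
    case True
    then show ?thesis using J neighbours[of 0] reflect(1) by (simp add: algebra_simps)
  next
    case False
    show ?thesis
    proof (cases "j = J - 1")
      case True
      then have "real (j - 1) = real J - 1 - 1" "real j = real J - 1"
        using \<open>j \<noteq> 0\<close> J by (simp_all add: of_nat_diff)
      then show ?thesis
        using True \<open>j \<noteq> 0\<close> neighbours[of "real J - 1"] reflect(2) by (simp add: algebra_simps)
    next
      case False
      then have "j + 1 < J" using j by simp
      then show ?thesis
        using False \<open>j \<noteq> 0\<close> neighbours[of "real j"] by (simp add: of_nat_diff algebra_simps)
    qed
  qed
  then show ?thesis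
    unfolding Pdelta_eq by simp
qed

lemma Pdelta_disc_mode:
  assumes "2 \<le> J" and "j < J"
  shows "Pdelta L J (disc_mode J p) j = - disc_eigenvalue L J p * disc_mode J p j"
proof -
  define th where "th = real p * pi / real J"
  define Y where "Y x = sqrt 2 * cos (th * (x + 1 / 2))" for x
  have mode: "disc_mode J p = (\<lambda>i. Y (real i))"
    unfolding disc_mode_def Y_def th_def by (simp add: field_simps)
  have neighbours: "Y (x - 1) + Y (x + 1) = 2 * cos th * Y x" for x
  proof -
    have "cos (th * (x + 1 / 2) - th) + cos (th * (x + 1 / 2) + th) = 2 * cos th * cos (th * (x + 1 / 2))"
      by (simp add: cos_add cos_diff)
    then show ?thesis
      unfolding Y_def by (simp add: algebra_simps flip: distrib_left)
  qed
  have reflect_left: "Y (-1) = Y 0"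
  proof -
    have "th * (-1 + 1 / 2) = - (th * (0 + 1 / 2))" by simp
    then show ?thesis unfolding Y_def by (metis cos_minus)
  qed
  have reflect_right: "Y (real J) = Y (real J - 1)"
  proof -
    have "th * real J = real p * pi" unfolding th_def using assms(1) by simp
    then have "Y (real J) = sqrt 2 * cos (real p * pi + th / 2)"
      and "Y (real J - 1) = sqrt 2 * cos (real p * pi - th / 2)"
      unfolding Y_def by (simp_all add: algebra_simps)
    then show ?thesis by (simp add: cos_add cos_diff)
  qed
  have "Pdelta L J (disc_mode J p) j = (2 * cos th - 2) / (dx L J)\<^sup>2 * disc_mode J p j"
    unfolding mode by (rule Pdelta_reflected_recurrence[OF assms neighbours reflect_left reflect_right])
  moreover have "2 * cos th - 2 = - (4 * (sin (th / 2))\<^sup>2)"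
    using cos_double_sin[of "th / 2"] by simp
  ultimately show ?thesis
    by (simp add: disc_eigenvalue_def th_def)
qed

lemma l2norm_disc_mode_le: "0 < J \<Longrightarrow> l2norm J (disc_mode J p) \<le> sqrt 2"
  by (rule l2norm_le_sup) (auto simp: disc_mode_def abs_mult)

lemma abs_node_diff_centre_le:
  fixes N i :: real
  assumes "2 \<le> N" and "0 \<le> i" and "i \<le> N - 1"
  shows "\<bar>i / (N - 1) - (i + 1 / 2) / N\<bar> \<le> 1 / (2 * N)"
proof -
  have "\<bar>i / (N - 1) - (i + 1 / 2) / N\<bar> = \<bar>2 * i - N + 1\<bar> / (2 * N * (N - 1))"
    using assms(1) by (simp add: field_simps abs_divide)
  also have "\<dots> \<le> (N - 1) / (2 * N * (N - 1))"
    using assms by (intro divide_right_mono) (auto simp: abs_le_iff)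
  also have "\<dots> = 1 / (2 * N)"
    using assms(1) by simp
  finally show ?thesis .
qed

lemma abs_cfun_node_diff_disc_mode_le:
  assumes L: "0 < L" and J: "2 \<le> J" and j: "j < J" and p: "0 < p"
  shows "\<bar>cfun L p (real j * dx L J) - disc_mode J p j\<bar> \<le> real p * pi * dx L J / L"
proof -
  define N where "N = real J"
  have N: "2 \<le> N" "real j \<le> N - 1" using J j by (auto simp: N_def)
  have dx: "dx L J = L / (N - 1)" unfolding dx_def N_def by simp
  define a where "a = real p * pi * (real j * dx L J) / L"
  define b where "b = real p * pi * (real j + 1 / 2) / N"
  have "a - b = real p * pi * (real j / (N - 1) - (real j + 1 / 2) / N)"
    unfolding a_def b_def dx using L N by (simp add: field_simps)
  then have "\<bar>a - b\<bar> = real p * pi * \<bar>real j / (N - 1) - (real j + 1 / 2) / N\<bar>"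
    by (simp add: abs_mult)
  also have "\<dots> \<le> real p * pi * (1 / (2 * N))"
    using abs_node_diff_centre_le[OF N(1) _ N(2)] by (intro mult_left_mono) auto
  also have "\<dots> \<le> real p * pi * (1 / (2 * (N - 1)))"
    using N by (intro mult_left_mono divide_left_mono) auto
  finally have ab: "\<bar>a - b\<bar> \<le> real p * pi * (1 / (2 * (N - 1)))" .
  have "\<bar>cfun L p (real j * dx L J) - disc_mode J p j\<bar> = sqrt 2 * \<bar>cos a - cos b\<bar>"
    unfolding cfun_def disc_mode_def a_def b_def N_def using p by (simp add: abs_mult flip: right_diff_distrib)
  also have "\<dots> \<le> 2 * \<bar>a - b\<bar>"
    using abs_cos_diff_le[of a b] sqrt2_less_2 by (intro mult_mono) auto
  also have "\<dots> \<le> 2 * (real p * pi * (1 / (2 * (N - 1))))"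
    using ab by simp
  also have "\<dots> = real p * pi * dx L J / L"
    unfolding dx using L N by (simp add: field_simps)
  finally show ?thesis .
qed

lemma l2norm_disc_mode_diff_node_le:
  assumes "0 < L" and "2 \<le> J" and "0 < p"
  shows "l2norm J (\<lambda>i. disc_mode J p i - Pi_grid L J (cfun L p) i) \<le> real p * pi * dx L J / L"
  using assms abs_cfun_node_diff_disc_mode_le[OF assms(1,2) _ assms(3)]
  by (intro l2norm_le_sup) (auto simp: Pi_grid_def abs_minus_commute)

lemma square_diff_4_sin_half_square_div_le:
  fixes th w h L :: real
  assumes "0 \<le> th" and "th \<le> w * h" and "0 < h" and "h \<le> L"
  shows "(th\<^sup>2 - 4 * (sin (th / 2))\<^sup>2) / h\<^sup>2 \<le> w ^ 4 * h * L"
proof -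
  have "(th\<^sup>2 - 4 * (sin (th / 2))\<^sup>2) / h\<^sup>2 \<le> (th ^ 4 / 12) / h\<^sup>2"
    using square_diff_4_sin_half_square_bounds(2)[OF assms(1)] by (rule divide_right_mono) simp
  also have "\<dots> \<le> (w * h) ^ 4 / h\<^sup>2"
  proof (rule divide_right_mono)
    show "th ^ 4 / 12 \<le> (w * h) ^ 4"
      using power_mono[OF assms(2,1), of 4] zero_le_power[OF assms(1), of 4] by linarith
  qed simp
  also have "\<dots> = w ^ 4 * h * h"
    using assms(3) by (simp add: power_mult_distrib power4_eq_xxxx power2_eq_square)
  also have "\<dots> \<le> w ^ 4 * h * L"
    using assms(3,4) by (simp add: mult_left_mono)
  finally show ?thesis .
qed

text \<open>With $\theta = p\pi/J$ and $h = \delta x$ we have $\nu_p = 4\sin^2(\theta/2)/h^2$, which differs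
  from $\mu_p$ for two reasons: $\theta/h = (p\pi/L)(J-1)/J$, because the mesh has $J - 1$
  intervals but $J$ cells, and $4\sin^2(\theta/2) < \theta^2$.\<close>

lemma disc_eigenvalue_bounds:
  assumes L: "0 < L" and J: "2 \<le> J"
  shows "0 \<le> heat_eigenvalue L p - disc_eigenvalue L J p"
    and "heat_eigenvalue L p - disc_eigenvalue L J p
           \<le> heat_eigenvalue L p * (2 / L + heat_eigenvalue L p * L) * dx L J"
proof -
  define N where "N = real J"
  define h where "h = dx L J"
  define w where "w = real p * pi / L"
  define th where "th = real p * pi / real J"
  have N: "2 \<le> N" using J by (simp add: N_def)
  have h: "h = L / (N - 1)" unfolding h_def dx_def N_def by simp
  have "0 < h" "h \<le> L" using dx_pos[OF L J] dx_le[OF L J] by (simp_all add: h_def)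
  have "0 \<le> w" "0 \<le> th" using L by (simp_all add: w_def th_def)
  define \<mu> where "\<mu> = heat_eigenvalue L p"
  have \<mu>: "\<mu> = w\<^sup>2" unfolding \<mu>_def heat_eigenvalue_def w_def ..
  have th: "th = w * h * ((N - 1) / N)"
    unfolding th_def w_def h N_def[symmetric] using L N by (simp add: field_simps)
  have "th \<le> w * h"
    unfolding th using \<open>0 \<le> w\<close> \<open>0 < h\<close> N by (intro mult_left_le) auto
  have split: "\<mu> - disc_eigenvalue L J p = (w\<^sup>2 - th\<^sup>2 / h\<^sup>2) + (th\<^sup>2 - 4 * (sin (th / 2))\<^sup>2) / h\<^sup>2"
    unfolding \<mu> disc_eigenvalue_def th_def h_def by (simp add: diff_divide_distrib)
  have "th / h = w * ((N - 1) / N)"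
    using \<open>0 < h\<close> unfolding th by simp
  then have q: "th\<^sup>2 / h\<^sup>2 = w\<^sup>2 * ((N - 1) / N)\<^sup>2" "((N - 1) / N)\<^sup>2 \<le> 1"
    using N by (simp_all only: power_mult_distrib flip: power_divide) (simp add: power_le_one)
  have "1 - ((N - 1) / N)\<^sup>2 \<le> 2 / N"
    using N by (simp add: field_simps power2_eq_square)
  also have "\<dots> \<le> 2 * h / L"
    unfolding h using L N by (simp add: field_simps)
  finally have "1 - ((N - 1) / N)\<^sup>2 \<le> 2 * h / L" .
  then have "w\<^sup>2 * (1 - ((N - 1) / N)\<^sup>2) \<le> w\<^sup>2 * (2 * h / L)"
    by (intro mult_left_mono) auto
  then have spacing: "w\<^sup>2 - th\<^sup>2 / h\<^sup>2 \<le> w\<^sup>2 * (2 * h / L)"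
    unfolding q by (simp add: right_diff_distrib)
  have consistency: "(th\<^sup>2 - 4 * (sin (th / 2))\<^sup>2) / h\<^sup>2 \<le> w ^ 4 * h * L"
    using \<open>0 \<le> th\<close> \<open>th \<le> w * h\<close> \<open>0 < h\<close> \<open>h \<le> L\<close> by (rule square_diff_4_sin_half_square_div_le)
  have "0 \<le> w\<^sup>2 - th\<^sup>2 / h\<^sup>2"
    unfolding q(1) using q(2) by (simp add: mult_left_le)
  moreover have "0 \<le> (th\<^sup>2 - 4 * (sin (th / 2))\<^sup>2) / h\<^sup>2"
    using square_diff_4_sin_half_square_bounds(1)[OF \<open>0 \<le> th\<close>] by simp
  ultimately show "0 \<le> heat_eigenvalue L p - disc_eigenvalue L J p"
    using split unfolding \<mu>_def by linarith
  show "heat_eigenvalue L p - disc_eigenvalue L J p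
      \<le> heat_eigenvalue L p * (2 / L + heat_eigenvalue L p * L) * dx L J"
    using split spacing consistency unfolding \<mu>_def[symmetric] \<mu> h_def[symmetric]
    by (simp add: algebra_simps power4_eq_xxxx power2_eq_square)
qed

section \<open>Consistency error of a single mode\<close>

lemma sum_exp_decay_le:
  assumes "0 < dt" and "0 < c"
  shows "(\<Sum>k<n. dt * exp (- c * (real k * dt))) \<le> dt + 1 / c"
proof -
  define q where "q = exp (- (c * dt))"
  have "0 < q" "q < 1" using assms by (simp_all add: q_def)
  have "1 + c * dt \<le> exp (c * dt)" by (rule exp_ge_add_one_self)
  then have "q * (1 + c * dt) \<le> 1" unfolding q_def by (simp add: exp_minus field_simps)
  then have "1 / (1 - q) \<le> (1 + c * dt) / (c * dt)"
    using \<open>q < 1\<close> assms by (simp add: field_simps)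
  moreover have "(\<Sum>k<n. q ^ k) \<le> 1 / (1 - q)"
    using \<open>0 < q\<close> \<open>q < 1\<close> by (simp add: sum_gp_strict divide_right_mono)
  ultimately have "dt * (\<Sum>k<n. q ^ k) \<le> dt * ((1 + c * dt) / (c * dt))"
    using assms(1) by (intro mult_left_mono) auto
  also have "\<dots> = dt + 1 / c" using assms by (simp add: field_simps)
  finally show ?thesis
    by (simp add: q_def sum_distrib_left flip: exp_of_nat_mult) (simp add: mult_ac)
qed

lemma sum_exp_heat_eigenvalue_le:
  assumes "0 < L" and "0 < dt" "dt < 1" and "0 < p"
  shows "(\<Sum>k<n. dt * exp (- heat_eigenvalue L p * (real k * dt))) \<le> 1 + L\<^sup>2 / pi\<^sup>2"
proof -
  have "pi\<^sup>2 / L\<^sup>2 \<le> heat_eigenvalue L p"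
    unfolding heat_eigenvalue_def power_divide power_mult_distrib using assms(1,4)
    by (intro divide_right_mono) auto
  moreover have "0 < pi\<^sup>2 / L\<^sup>2" using assms(1) by simp
  ultimately have "0 < heat_eigenvalue L p" "1 / heat_eigenvalue L p \<le> 1 / (pi\<^sup>2 / L\<^sup>2)"
    using frac_le[of 1 1 "pi\<^sup>2 / L\<^sup>2" "heat_eigenvalue L p"] by auto
  then show ?thesis
    using sum_exp_decay_le[OF assms(2), of "heat_eigenvalue L p" n] assms(3) by simp
qed

lemma Ldelta_cfun_decomp:
  fixes p :: nat
  assumes "L \<noteq> 0" and "2 \<le> J" and "j < J"
  defines "d \<equiv> \<lambda>i. disc_mode J p i - Pi_grid L J (cfun L p) i"
  shows "Ldelta L J (cfun L p) j = (disc_eigenvalue L J p - heat_eigenvalue L p) * disc_mode J p j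
      + heat_eigenvalue L p * d j + Pdelta L J d j"
proof -
  have "Pi_grid L J (cfun L p) = (\<lambda>i. disc_mode J p i - d i)" by (simp add: d_def)
  then have "Pdelta L J (Pi_grid L J (cfun L p)) j = - disc_eigenvalue L J p * disc_mode J p j - Pdelta L J d j"
    using Pdelta_disc_mode[OF assms(2,3)] by (simp add: Pdelta_diff)
  then show ?thesis
    unfolding Ldelta_cfun[OF assms(1)] by (simp add: d_def Pi_grid_def algebra_simps)
qed

lemma duhamel_cfun_decomp:
  fixes p :: nat and dt :: real and w :: "nat \<Rightarrow> real"
  assumes "L \<noteq> 0" and "2 \<le> J" and "j < J"
  defines "S \<equiv> scheme_op L J dt"
    and "y \<equiv> disc_mode J p"
    and "d \<equiv> \<lambda>i. disc_mode J p i - Pi_grid L J (cfun L p) i"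
    and "\<mu> \<equiv> heat_eigenvalue L p" and "\<nu> \<equiv> disc_eigenvalue L J p"
  shows "duhamel L J dt n (\<lambda>k i. w k * Ldelta L J (cfun L p) i) j
    = (\<nu> - \<mu>) * duhamel L J dt n (\<lambda>k i. w k * y i) j + \<mu> * duhamel L J dt n (\<lambda>k i. w k * d i) j
    + (\<Sum>k<n. w k * ((S ^^ Suc (n - 1 - k)) d j - (S ^^ (n - 1 - k)) d j))"
proof -
  have summand: "dt * (S ^^ m) (\<lambda>i. w k * Ldelta L J (cfun L p) i) j
      = (\<nu> - \<mu>) * (dt * (S ^^ m) (\<lambda>i. w k * y i) j) + \<mu> * (dt * (S ^^ m) (\<lambda>i. w k * d i) j)
        + w k * ((S ^^ Suc m) d j - (S ^^ m) d j)" for m k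
  proof -
    have "(S ^^ m) (\<lambda>i. w k * Ldelta L J (cfun L p) i) j
        = (S ^^ m) (\<lambda>i. (w k * (\<nu> - \<mu>)) * y i + ((w k * \<mu>) * d i + w k * Pdelta L J d i)) j"
      using assms(3)
      unfolding S_def y_def d_def \<mu>_def \<nu>_def
      by (intro funpow_scheme_op_cong) (simp add: Ldelta_cfun_decomp[OF assms(1,2)] algebra_simps)
    also have "\<dots> = (w k * (\<nu> - \<mu>)) * (S ^^ m) y j
        + ((w k * \<mu>) * (S ^^ m) d j + w k * (S ^^ m) (Pdelta L J d) j)"
      unfolding S_def by (simp only: funpow_scheme_op_add funpow_scheme_op_scale)
    finally have "dt * (S ^^ m) (\<lambda>i. w k * Ldelta L J (cfun L p) i) j
        = dt * ((w k * (\<nu> - \<mu>)) * (S ^^ m) y j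
          + ((w k * \<mu>) * (S ^^ m) d j + w k * (S ^^ m) (Pdelta L J d) j))"
      by (rule arg_cong)
    then show ?thesis
      unfolding S_def funpow_scheme_op_Pdelta[symmetric] funpow_scheme_op_scale by (simp add: algebra_simps)
  qed
  have "duhamel L J dt n (\<lambda>k i. w k * Ldelta L J (cfun L p) i) j
      = (\<Sum>k<n. dt * (S ^^ (n - 1 - k)) (\<lambda>i. w k * Ldelta L J (cfun L p) i) j)"
    by (simp add: duhamel_def S_def sum_distrib_left)
  also have "\<dots> = (\<Sum>k<n. (\<nu> - \<mu>) * (dt * (S ^^ (n - 1 - k)) (\<lambda>i. w k * y i) j)
      + \<mu> * (dt * (S ^^ (n - 1 - k)) (\<lambda>i. w k * d i) j)
      + w k * ((S ^^ Suc (n - 1 - k)) d j - (S ^^ (n - 1 - k)) d j))"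
    by (rule sum.cong[OF refl]) (rule summand)
  finally show ?thesis
    by (simp add: duhamel_def S_def sum.distrib sum_distrib_left)
qed

lemma l2norm_duhamel_telescope_le:
  fixes dt :: real and w :: "nat \<Rightarrow> real" and d :: "nat \<Rightarrow> real"
  assumes "2 \<le> J" and "0 \<le> dt" and "dt / (dx L J)\<^sup>2 \<le> 1 / 2" and "1 \<le> n"
    and "\<And>k. 0 \<le> w k" and "\<And>k. w (Suc k) \<le> w k"
  defines "X \<equiv> \<lambda>m. (scheme_op L J dt ^^ m) d"
  shows "l2norm J (\<lambda>j. \<Sum>k<n. w k * (X (Suc (n - 1 - k)) j - X (n - 1 - k) j)) \<le> 2 * w 0 * l2norm J d"
proof -
  obtain n' where n: "n = Suc n'" using assms(4) by (cases n) auto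
  define c where "c i = w (n' - i)" for i
  have reindex: "(\<Sum>k<n. w k * (X (Suc (n - 1 - k)) j - X (n - 1 - k) j))
      = (\<Sum>i<Suc n'. c i * (X (Suc i) j - X i j))" for j
    unfolding n c_def by (subst sum.nat_diff_reindex[symmetric]) (auto intro: sum.cong)
  have "c i \<le> c (Suc i)" for i
    unfolding c_def using assms(6)[of "n' - Suc i"] by (cases "i < n'") (simp_all add: Suc_diff_Suc)
  then have "l2norm J (\<lambda>j. \<Sum>i<Suc n'. c i * (X (Suc i) j - X i j)) \<le> 2 * c n' * l2norm J d"
    using assms(5) l2norm_funpow_scheme_op_le[OF assms(1-3)]
    by (intro l2norm_abel_sum_le) (auto simp: c_def X_def)
  then show ?thesis
    unfolding reindex by (simp add: c_def)
qed

definition mode_error_const :: "real \<Rightarrow> real" where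
  "mode_error_const L = (sqrt 2 * (2 * pi\<^sup>2 + pi ^ 4) + pi ^ 3) * (1 + L\<^sup>2 / pi\<^sup>2) / L ^ 3 + 2 * pi / L"

lemma mode_error_const_pos: "0 < L \<Longrightarrow> 0 < mode_error_const L"
  unfolding mode_error_const_def by (intro add_pos_pos divide_pos_pos mult_pos_pos) auto

lemma mode_error_terms_le:
  fixes L h \<epsilon> :: real and p :: nat
  assumes "0 < L" and "0 \<le> h" and "0 < p" and "0 \<le> \<epsilon>"
    and "\<epsilon> \<le> heat_eigenvalue L p * (2 / L + heat_eigenvalue L p * L) * h"
  defines "G \<equiv> 1 + L\<^sup>2 / pi\<^sup>2" and "\<delta> \<equiv> real p * pi * h / L"
  shows "\<epsilon> * (G * sqrt 2) + heat_eigenvalue L p * (G * \<delta>) + 2 * \<delta> \<le> mode_error_const L * real p ^ 4 * h"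
proof -
  define P where "P = real p"
  have P: "1 \<le> P" "P \<le> P ^ 4" "P ^ 2 \<le> P ^ 4" "P ^ 3 \<le> P ^ 4"
    using assms(3) power_increasing[of 1 4 P] power_increasing[of 2 4 P] power_increasing[of 3 4 P]
    by (auto simp: P_def)
  have "0 \<le> G" by (simp add: G_def)
  have \<mu>: "heat_eigenvalue L p = P ^ 2 * pi ^ 2 / L ^ 2"
    by (simp add: heat_eigenvalue_def P_def power_divide power_mult_distrib)
  have "\<epsilon> \<le> (2 * pi ^ 2 * P ^ 2 + pi ^ 4 * P ^ 4) * h / L ^ 3"
    using assms(5) assms(1) unfolding \<mu> by (simp add: field_simps power2_eq_square power3_eq_cube power4_eq_xxxx)
  also have "\<dots> \<le> (2 * pi ^ 2 + pi ^ 4) * P ^ 4 * h / L ^ 3"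
    using mult_left_mono[OF P(3), of "2 * pi ^ 2"] assms(1,2)
    by (intro divide_right_mono mult_right_mono) (auto simp: algebra_simps)
  also have "\<dots> = (2 * pi ^ 2 + pi ^ 4) / L ^ 3 * (P ^ 4 * h)"
    by simp
  finally have "\<epsilon> * (G * sqrt 2) \<le> ((2 * pi ^ 2 + pi ^ 4) / L ^ 3 * (P ^ 4 * h)) * (G * sqrt 2)"
    using \<open>0 \<le> G\<close> by (intro mult_right_mono) auto
  moreover have "heat_eigenvalue L p * \<delta> * G \<le> (pi ^ 3 / L ^ 3 * (P ^ 4 * h)) * G"
  proof -
    have "heat_eigenvalue L p * \<delta> = pi ^ 3 / L ^ 3 * (P ^ 3 * h)"
      unfolding \<mu> \<delta>_def P_def[symmetric] using assms(1) by (simp add: field_simps power2_eq_square power3_eq_cube)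
    also have "\<dots> \<le> pi ^ 3 / L ^ 3 * (P ^ 4 * h)"
      using P assms(1,2) by (intro mult_left_mono mult_right_mono) auto
    finally show ?thesis
      using \<open>0 \<le> G\<close> by (rule mult_right_mono)
  qed
  moreover have "2 * \<delta> \<le> 2 * pi / L * (P ^ 4 * h)"
  proof -
    have "P * h \<le> P ^ 4 * h" using P assms(2) by (intro mult_right_mono) auto
    then show ?thesis
      unfolding \<delta>_def P_def[symmetric] using assms(1) by (simp add: field_simps)
  qed
  ultimately show ?thesis
    unfolding mode_error_const_def G_def P_def[symmetric] by (simp add: algebra_simps add_divide_distrib)
qed

lemma l2norm_duhamel_cfun_le:
  assumes L: "0 < L" and J: "2 \<le> J" and dt: "0 < dt" "dt < 1" and cfl: "dt / (dx L J)\<^sup>2 \<le> 1 / 2"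
    and p: "0 < p" and n: "1 \<le> n"
  shows "l2norm J (duhamel L J dt n (\<lambda>k i. exp (- heat_eigenvalue L p * (real k * dt)) * Ldelta L J (cfun L p) i))
    \<le> mode_error_const L * real p ^ 4 * dx L J"
proof -
  define S where "S = scheme_op L J dt"
  define y where "y = disc_mode J p"
  define d where "d = (\<lambda>i. disc_mode J p i - Pi_grid L J (cfun L p) i)"
  define \<mu> where "\<mu> = heat_eigenvalue L p"
  define \<nu> where "\<nu> = disc_eigenvalue L J p"
  define D where "D k = exp (- \<mu> * (real k * dt))" for k
  define G where "G = 1 + L\<^sup>2 / pi\<^sup>2"
  define \<delta> where "\<delta> = real p * pi * dx L J / L"
  have "0 \<le> \<mu>" "0 \<le> \<mu> - \<nu>"
    using heat_eigenvalue_nonneg disc_eigenvalue_bounds(1)[OF L J] by (simp_all add: \<mu>_def \<nu>_def)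
  have D: "0 \<le> D k" "D (Suc k) \<le> D k" for k
    using \<open>0 \<le> \<mu>\<close> dt by (auto simp: D_def mult_left_mono)
  have "(\<Sum>k<n. dt * D k) \<le> G"
    unfolding D_def G_def \<mu>_def using sum_exp_heat_eigenvalue_le[OF L dt p] .
  then have weighted: "l2norm J (duhamel L J dt n (\<lambda>k i. D k * v i)) \<le> G * l2norm J v" for v
    using l2norm_duhamel_le[OF J _ cfl, of D n v] dt D(1) l2norm_nonneg[of J v]
    by (meson less_imp_le mult_right_mono order_trans)
  have "l2norm J y \<le> sqrt 2" "l2norm J d \<le> \<delta>"
    using J L p l2norm_disc_mode_le l2norm_disc_mode_diff_node_le
    by (simp_all add: y_def d_def \<delta>_def)
  have "l2norm J (duhamel L J dt n (\<lambda>k i. D k * Ldelta L J (cfun L p) i))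
      = l2norm J (\<lambda>j. (\<nu> - \<mu>) * duhamel L J dt n (\<lambda>k i. D k * y i) j
          + \<mu> * duhamel L J dt n (\<lambda>k i. D k * d i) j
          + (\<Sum>k<n. D k * ((S ^^ Suc (n - 1 - k)) d j - (S ^^ (n - 1 - k)) d j)))"
    using L J unfolding S_def y_def d_def \<mu>_def \<nu>_def
    by (intro l2norm_cong duhamel_cfun_decomp) auto
  also have "\<dots> \<le> (\<mu> - \<nu>) * l2norm J (duhamel L J dt n (\<lambda>k i. D k * y i))
        + \<mu> * l2norm J (duhamel L J dt n (\<lambda>k i. D k * d i))
        + l2norm J (\<lambda>j. \<Sum>k<n. D k * ((S ^^ Suc (n - 1 - k)) d j - (S ^^ (n - 1 - k)) d j))"
    using l2norm_add_le[of J "\<lambda>j. (\<nu> - \<mu>) * duhamel L J dt n (\<lambda>k i. D k * y i) j"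
        "\<lambda>j. \<mu> * duhamel L J dt n (\<lambda>k i. D k * d i) j"] \<open>0 \<le> \<mu>\<close> \<open>0 \<le> \<mu> - \<nu>\<close>
    by (intro order_trans[OF l2norm_add_le] add_right_mono) (simp_all add: l2norm_scale)
  also have "\<dots> \<le> (\<mu> - \<nu>) * (G * sqrt 2) + \<mu> * (G * \<delta>) + 2 * \<delta>"
  proof (intro add_mono mult_left_mono)
    show "l2norm J (duhamel L J dt n (\<lambda>k i. D k * y i)) \<le> G * sqrt 2"
      using weighted[of y] \<open>l2norm J y \<le> sqrt 2\<close> by (simp add: G_def order_trans mult_left_mono)
    show "l2norm J (duhamel L J dt n (\<lambda>k i. D k * d i)) \<le> G * \<delta>"
      using weighted[of d] \<open>l2norm J d \<le> \<delta>\<close> by (simp add: G_def order_trans mult_left_mono)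
    show "l2norm J (\<lambda>j. \<Sum>k<n. D k * ((S ^^ Suc (n - 1 - k)) d j - (S ^^ (n - 1 - k)) d j)) \<le> 2 * \<delta>"
      using l2norm_duhamel_telescope_le[OF J _ cfl n, of D d] D dt \<open>l2norm J d \<le> \<delta>\<close>
      by (simp add: S_def D_def)
  qed (use \<open>0 \<le> \<mu>\<close> \<open>0 \<le> \<mu> - \<nu>\<close> in auto)
  also have "\<dots> \<le> mode_error_const L * real p ^ 4 * dx L J"
    unfolding \<mu>_def \<nu>_def G_def \<delta>_def
    by (rule mode_error_terms_le[OF L _ p]) (use disc_eigenvalue_bounds[OF L J] dx_pos[OF L J] in auto)
  finally show ?thesis by (simp add: D_def \<mu>_def)
qed

section \<open>The cosine series of the solution\<close>

lemma summable_abs_mult_pow_mono: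
  fixes a :: "nat \<Rightarrow> real"
  assumes "summable (\<lambda>p. \<bar>a p\<bar> * real p ^ k)" and "i \<le> k"
  shows "summable (\<lambda>p. \<bar>a p\<bar> * real p ^ i)"
proof (rule summable_comparison_test_ev[OF _ assms(1)])
  have "\<bar>a p\<bar> * real p ^ i \<le> \<bar>a p\<bar> * real p ^ k" if "1 \<le> p" for p
    using that assms(2) by (intro mult_left_mono power_increasing) auto
  then show "\<forall>\<^sub>F p in sequentially. norm (\<bar>a p\<bar> * real p ^ i) \<le> \<bar>a p\<bar> * real p ^ k"
    by (auto simp: eventually_sequentially)
qed

lemma summable_cos_series:
  "summable (\<lambda>p. \<bar>a p\<bar>) \<Longrightarrow> summable (\<lambda>p. a p * cfun L p x)"
  by (rule summable_comparison_test'[OF summable_mult2[of _ "sqrt 2"]])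
    (auto simp: abs_mult mult_left_mono abs_cfun_le)

lemma deriv2_cos_series:
  fixes a :: "nat \<Rightarrow> real"
  assumes L: "L \<noteq> 0" and a: "summable (\<lambda>p. \<bar>a p\<bar> * real p ^ 2)"
  shows "(\<lambda>p. a p * (- heat_eigenvalue L p * cfun L p x)) sums deriv (deriv (\<lambda>x. \<Sum>p. a p * cfun L p x)) x"
proof -
  define f1 where "f1 = (\<lambda>p x. a p * dcfun L p x)"
  define f2 where "f2 = (\<lambda>p x. a p * (- heat_eigenvalue L p * cfun L p x))"
  have "summable (\<lambda>p. \<bar>a p\<bar>)"
    using summable_abs_mult_pow_mono[OF a, of 0] by simp
  have a1: "summable (\<lambda>p. sqrt 2 * \<bar>pi / L\<bar> * (\<bar>a p\<bar> * real p ^ 1))"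
    using summable_abs_mult_pow_mono[OF a, of 1] by (intro summable_mult) simp
  have a2: "summable (\<lambda>p. sqrt 2 * (pi / L)\<^sup>2 * (\<bar>a p\<bar> * real p ^ 2))"
    using a by (intro summable_mult)
  have bound1: "norm (f1 p x) \<le> sqrt 2 * \<bar>pi / L\<bar> * (\<bar>a p\<bar> * real p ^ 1)" for p x
    using mult_left_mono[OF abs_dcfun_le[of L p x] abs_ge_zero[of "a p"]]
    by (simp add: f1_def abs_mult mult_ac)
  have bound2: "norm (f2 p x) \<le> sqrt 2 * (pi / L)\<^sup>2 * (\<bar>a p\<bar> * real p ^ 2)" for p x
    using mult_left_mono[OF abs_cfun_le[of L p x], of "\<bar>a p\<bar> * heat_eigenvalue L p"]
    by (simp add: f2_def heat_eigenvalue_def abs_mult power_mult_distrib power_divide mult_ac)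
  have der1: "((\<lambda>x. a p * cfun L p x) has_field_derivative f1 p x) (at x)" for p x
    unfolding f1_def using has_field_derivative_cfun[OF L] by (rule DERIV_cmult)
  have der2: "(f1 p has_field_derivative f2 p x) (at x)" for p x
    unfolding f1_def f2_def using has_field_derivative_dcfun[OF L] by (rule DERIV_cmult)
  have d1: "((\<lambda>x. \<Sum>p. a p * cfun L p x) has_field_derivative (\<Sum>p. f1 p x)) (at x)" for x
  proof (rule has_field_derivative_series'(2)[of UNIV "\<lambda>p x. a p * cfun L p x" f1 0])
    show "uniformly_convergent_on UNIV (\<lambda>n x. \<Sum>p<n. f1 p x)"
      by (rule Weierstrass_m_test'[OF _ a1]) (use bound1 in blast)
  qed (use der1 summable_cos_series[OF \<open>summable (\<lambda>p. \<bar>a p\<bar>)\<close>] in auto)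
  have d2: "((\<lambda>x. \<Sum>p. f1 p x) has_field_derivative (\<Sum>p. f2 p x)) (at x)" for x
  proof (rule has_field_derivative_series'(2)[of UNIV f1 f2 0])
    show "uniformly_convergent_on UNIV (\<lambda>n x. \<Sum>p<n. f2 p x)"
      by (rule Weierstrass_m_test'[OF _ a2]) (use bound2 in blast)
    show "summable (\<lambda>p. f1 p 0)"
      using bound1 by (intro summable_comparison_test'[OF a1]) auto
  qed (use der2 in auto)
  have "deriv (\<lambda>x. \<Sum>p. a p * cfun L p x) = (\<lambda>x. \<Sum>p. f1 p x)"
    by (rule ext) (rule DERIV_imp_deriv[OF d1])
  then have "deriv (deriv (\<lambda>x. \<Sum>p. a p * cfun L p x)) x = (\<Sum>p. f2 p x)"
    using DERIV_imp_deriv[OF d2] by simp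
  moreover have "summable (\<lambda>p. f2 p x)"
    using bound2 by (intro summable_comparison_test'[OF a2]) auto
  ultimately show ?thesis
    by (simp add: f2_def summable_sums)
qed

lemma sol_eq_cos_series:
  "sol L u0 t = (\<lambda>x. \<Sum>p. (alpha L u0 p * exp (- heat_eigenvalue L p * t)) * cfun L p x)"
  unfolding sol_def exp_heat_eigenvalue ..

lemma sums_Ldelta_sol:
  assumes "0 < L" and "0 \<le> t" and \<alpha>: "summable (\<lambda>p. \<bar>alpha L u0 p\<bar> * real p ^ 2)"
  shows "(\<lambda>p. alpha L u0 p * exp (- heat_eigenvalue L p * t) * Ldelta L J (cfun L p) j)
      sums Ldelta L J (sol L u0 t) j"
proof -
  define a where "a p = alpha L u0 p * exp (- heat_eigenvalue L p * t)" for p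
  have a_le: "\<bar>a p\<bar> \<le> \<bar>alpha L u0 p\<bar>" for p
  proof -
    have "exp (- heat_eigenvalue L p * t) \<le> 1"
      using heat_eigenvalue_nonneg[of L p] assms(2) by (simp add: mult_nonneg_nonneg)
    then show ?thesis
      by (simp add: a_def abs_mult mult_left_le)
  qed
  have a2: "summable (\<lambda>p. \<bar>a p\<bar> * real p ^ 2)"
    by (rule summable_comparison_test'[OF \<alpha>]) (simp add: mult_right_mono a_le)
  then have a0: "summable (\<lambda>p. \<bar>a p\<bar>)"
    using summable_abs_mult_pow_mono[OF a2, of 0] by simp
  have "(\<lambda>p. a p * (- heat_eigenvalue L p * cfun L p (real j * dx L J)))
      sums Pi_grid L J (deriv (deriv (sol L u0 t))) j"
    unfolding Pi_grid_def sol_eq_cos_series a_def[symmetric]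
    using deriv2_cos_series[OF _ a2] assms(1) by simp
  moreover have "(\<lambda>p. Pdelta L J (\<lambda>i. a p * cfun L p (real i * dx L J)) j)
      sums Pdelta L J (Pi_grid L J (sol L u0 t)) j"
    unfolding Pi_grid_def sol_eq_cos_series a_def[symmetric]
    using summable_cos_series[OF a0] by (intro sums_Pdelta summable_sums)
  ultimately have "(\<lambda>p. a p * (- heat_eigenvalue L p * cfun L p (real j * dx L J))
      - Pdelta L J (\<lambda>i. a p * cfun L p (real i * dx L J)) j) sums Ldelta L J (sol L u0 t) j"
    unfolding Ldelta_def by (rule sums_diff)
  moreover have "(\<lambda>p. a p * (- heat_eigenvalue L p * cfun L p (real j * dx L J))
      - Pdelta L J (\<lambda>i. a p * cfun L p (real i * dx L J)) j) = (\<lambda>p. a p * Ldelta L J (cfun L p) j)"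
    using assms(1) by (simp add: Ldelta_cfun Pdelta_scale Pi_grid_def right_diff_distrib)
  ultimately show ?thesis
    unfolding a_def by simp
qed

lemma Ldelta_cfun_0: "L \<noteq> 0 \<Longrightarrow> 2 \<le> J \<Longrightarrow> j < J \<Longrightarrow> Ldelta L J (cfun L 0) j = 0"
  by (auto simp: Ldelta_cfun heat_eigenvalue_def Pdelta_def Pi_grid_def cfun_def)

lemma duhamel_eq_0:
  assumes "\<And>k i. i < J \<Longrightarrow> E k i = 0" and "j < J"
  shows "duhamel L J dt n E j = 0"
proof -
  have "(scheme_op L J dt ^^ m) (E k) j = (scheme_op L J dt ^^ m) (\<lambda>i. 0 * E k i) j" for m k
    using assms by (intro funpow_scheme_op_cong) auto
  then show ?thesis
    unfolding duhamel_def funpow_scheme_op_scale by simp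
qed

lemma l2norm_duhamel_Ldelta_sol_le:
  assumes L: "0 < L" and J: "2 \<le> J" and dt: "0 < dt" "dt < 1" and cfl: "dt / (dx L J)\<^sup>2 \<le> 1 / 2"
    and n: "1 \<le> n" and \<alpha>: "summable (\<lambda>p. \<bar>alpha L u0 p\<bar> * real p ^ 4)"
  shows "l2norm J (duhamel L J dt n (\<lambda>k. Ldelta L J (sol L u0 (real k * dt))))
    \<le> mode_error_const L * dx L J * (\<Sum>p. \<bar>alpha L u0 p\<bar> * real p ^ 4)"
proof -
  define mode where
    "mode p = duhamel L J dt n (\<lambda>k i. exp (- heat_eigenvalue L p * (real k * dt)) * Ldelta L J (cfun L p) i)"
    for p
  have "(\<lambda>p. alpha L u0 p * exp (- heat_eigenvalue L p * (real k * dt)) * Ldelta L J (cfun L p) i)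
      sums Ldelta L J (sol L u0 (real k * dt)) i" for k i
    using dt summable_abs_mult_pow_mono[OF \<alpha>] by (intro sums_Ldelta_sol[OF L]) auto
  then have "(\<lambda>p. duhamel L J dt n (\<lambda>k i. alpha L u0 p * (exp (- heat_eigenvalue L p * (real k * dt))
      * Ldelta L J (cfun L p) i)) j) sums duhamel L J dt n (\<lambda>k. Ldelta L J (sol L u0 (real k * dt))) j" for j
    unfolding mult.assoc by (rule sums_duhamel)
  then have sums: "(\<lambda>p. alpha L u0 p * mode p j) sums duhamel L J dt n (\<lambda>k. Ldelta L J (sol L u0 (real k * dt))) j"
    for j
    unfolding duhamel_scale mode_def .
  have bound: "l2norm J (\<lambda>j. alpha L u0 p * mode p j)
      \<le> \<bar>alpha L u0 p\<bar> * real p ^ 4 * (mode_error_const L * dx L J)" for p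
  proof (cases "p = 0")
    case True
    then have "l2norm J (mode p) = l2norm J (\<lambda>j. 0)"
      unfolding mode_def using L J Ldelta_cfun_0 by (intro l2norm_cong duhamel_eq_0) auto
    then have "l2norm J (mode p) = 0" by (simp add: l2norm_def)
    then show ?thesis using True by (simp add: l2norm_scale)
  next
    case False
    then show ?thesis
      using mult_left_mono[OF l2norm_duhamel_cfun_le[OF L J dt cfl _ n, of p] abs_ge_zero[of "alpha L u0 p"]]
      by (simp add: l2norm_scale mode_def mult_ac)
  qed
  have "l2norm J (duhamel L J dt n (\<lambda>k. Ldelta L J (sol L u0 (real k * dt))))
      \<le> (\<Sum>p. \<bar>alpha L u0 p\<bar> * real p ^ 4 * (mode_error_const L * dx L J))"
    using sums bound summable_mult2[OF \<alpha>] by (rule l2norm_suminf_le)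
  also have "\<dots> = mode_error_const L * dx L J * (\<Sum>p. \<bar>alpha L u0 p\<bar> * real p ^ 4)"
    unfolding suminf_mult2[OF \<alpha>, symmetric] by (rule mult.commute)
  finally show ?thesis .
qed

section \<open>Decay of the cosine coefficients of $H^6$ data\<close>

lemma has_integral_cos_int_multiple:
  assumes "0 < L" and "m \<noteq> 0"
  shows "((\<lambda>x. cos (real_of_int m * pi / L * x)) has_integral 0) {0..L}"
proof -
  define c where "c = real_of_int m * pi / L"
  have "c \<noteq> 0" using assms by (simp add: c_def)
  have "((\<lambda>x. sin (c * x) / c) has_vector_derivative cos (c * x)) (at x within {0..L})" for x
    using \<open>c \<noteq> 0\<close>
    by (auto intro!: derivative_eq_intros simp flip: has_real_derivative_iff_has_vector_derivative)
  then have "((\<lambda>x. cos (c * x)) has_integral (sin (c * L) / c - sin (c * 0) / c)) {0..L}"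
    using assms(1) by (intro fundamental_theorem_of_calculus) auto
  moreover have "c * L = pi * real_of_int m" using assms(1) by (simp add: c_def)
  ultimately show ?thesis by (simp add: c_def)
qed

lemma has_integral_sin_mult_sin:
  assumes "0 < L" and "0 < p" and "0 < q"
  shows "((\<lambda>x. sin (real p * pi * x / L) * sin (real q * pi * x / L)) has_integral (if p = q then L / 2 else 0)) {0..L}"
proof -
  define a where "a = real_of_int (int p - int q)"
  define b where "b = real_of_int (int p + int q)"
  have prod: "sin (real p * pi * x / L) * sin (real q * pi * x / L) = (cos (a * pi / L * x) - cos (b * pi / L * x)) / 2" for x
    unfolding sin_times_sin a_def b_def by (simp add: algebra_simps add_divide_distrib diff_divide_distrib)
  have "((\<lambda>x. cos (a * pi / L * x)) has_integral (if p = q then L else 0)) {0..L}"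
    using has_integral_cos_int_multiple[OF assms(1), of "int p - int q"] assms(1)
      has_integral_const_real[of "1::real" 0 L]
    by (cases "p = q") (simp_all add: a_def)
  moreover have "((\<lambda>x. cos (b * pi / L * x)) has_integral 0) {0..L}"
    unfolding b_def using assms by (intro has_integral_cos_int_multiple) auto
  ultimately have "((\<lambda>x. (cos (a * pi / L * x) - cos (b * pi / L * x)) / 2) has_integral
      ((if p = q then L else 0) - 0) / 2) {0..L}"
    by (intro has_integral_divide has_integral_diff)
  moreover have "((if p = q then L else 0) - 0) / 2 = (if p = q then L / 2 else 0)" by simp
  ultimately show ?thesis unfolding prod by simp
qed

lemma bessel_inequality_integral:
  fixes f :: "real \<Rightarrow> real" and s :: "nat \<Rightarrow> real \<Rightarrow> real"
  assumes "finite A" and "0 < c" and f: "continuous_on {a..b} f"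
    and s: "\<And>p. p \<in> A \<Longrightarrow> continuous_on {a..b} (s p)"
    and orth: "\<And>p q. p \<in> A \<Longrightarrow> q \<in> A \<Longrightarrow> ((\<lambda>x. s p x * s q x) has_integral (if p = q then c else 0)) {a..b}"
  shows "(\<Sum>p\<in>A. (integral {a..b} (\<lambda>x. f x * s p x))\<^sup>2) \<le> c * integral {a..b} (\<lambda>x. (f x)\<^sup>2)"
proof -
  define \<beta> where "\<beta> p = integral {a..b} (\<lambda>x. f x * s p x)" for p
  define \<gamma> where "\<gamma> p = \<beta> p / c" for p
  have int_f2: "((\<lambda>x. (f x)\<^sup>2) has_integral integral {a..b} (\<lambda>x. (f x)\<^sup>2)) {a..b}"
    using f by (intro integrable_integral integrable_continuous_interval continuous_intros)
  have int_fs: "((\<lambda>x. f x * s p x) has_integral \<beta> p) {a..b}" if "p \<in> A" for p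
    unfolding \<beta>_def using f s[OF that]
    by (intro integrable_integral integrable_continuous_interval continuous_intros)
  have square: "(f x - (\<Sum>p\<in>A. \<gamma> p * s p x))\<^sup>2
      = (f x)\<^sup>2 - 2 * (\<Sum>p\<in>A. \<gamma> p * (f x * s p x)) + (\<Sum>p\<in>A. \<Sum>q\<in>A. \<gamma> p * \<gamma> q * (s p x * s q x))" for x
  proof -
    have "(\<Sum>p\<in>A. \<gamma> p * s p x)\<^sup>2 = (\<Sum>p\<in>A. \<Sum>q\<in>A. \<gamma> p * \<gamma> q * (s p x * s q x))"
      unfolding power2_eq_square sum_product by (simp add: mult_ac)
    moreover have "(\<Sum>p\<in>A. \<gamma> p * (f x * s p x)) = f x * (\<Sum>p\<in>A. \<gamma> p * s p x)"
      by (simp add: sum_distrib_left mult_ac)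
    ultimately show ?thesis by (simp add: power2_diff)
  qed
  have "((\<lambda>x. (f x - (\<Sum>p\<in>A. \<gamma> p * s p x))\<^sup>2) has_integral (integral {a..b} (\<lambda>x. (f x)\<^sup>2)
      - 2 * (\<Sum>p\<in>A. \<gamma> p * \<beta> p) + (\<Sum>p\<in>A. \<Sum>q\<in>A. \<gamma> p * \<gamma> q * (if p = q then c else 0)))) {a..b}"
    unfolding square
    by (intro has_integral_add has_integral_diff has_integral_mult_right has_integral_sum
        int_f2 int_fs orth \<open>finite A\<close>)
  then have "0 \<le> integral {a..b} (\<lambda>x. (f x)\<^sup>2) - 2 * (\<Sum>p\<in>A. \<gamma> p * \<beta> p)
      + (\<Sum>p\<in>A. \<Sum>q\<in>A. \<gamma> p * \<gamma> q * (if p = q then c else 0))"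
    by (rule has_integral_nonneg) simp
  moreover have "(\<Sum>p\<in>A. \<Sum>q\<in>A. \<gamma> p * \<gamma> q * (if p = q then c else 0)) = (\<Sum>p\<in>A. \<gamma> p * \<beta> p)"
  proof (rule sum.cong[OF refl])
    fix p assume "p \<in> A"
    have "(\<Sum>q\<in>A. \<gamma> p * \<gamma> q * (if p = q then c else 0)) = (\<Sum>q\<in>A. if p = q then \<gamma> p * \<gamma> q * c else 0)"
      by (intro sum.cong) auto
    also have "\<dots> = \<gamma> p * \<gamma> p * c"
      using \<open>p \<in> A\<close> \<open>finite A\<close> by simp
    finally show "(\<Sum>q\<in>A. \<gamma> p * \<gamma> q * (if p = q then c else 0)) = \<gamma> p * \<beta> p"
      using \<open>0 < c\<close> by (simp add: \<gamma>_def)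
  qed
  moreover have "(\<Sum>p\<in>A. \<gamma> p * \<beta> p) = (\<Sum>p\<in>A. (\<beta> p)\<^sup>2) / c"
    by (simp add: \<gamma>_def power2_eq_square sum_divide_distrib)
  ultimately show ?thesis
    using \<open>0 < c\<close> by (simp add: \<beta>_def pos_divide_le_eq mult.commute)
qed

lemma has_integral_mult_by_parts:
  fixes F f g g' :: "real \<Rightarrow> real"
  assumes "a \<le> b" and "continuous_on {a..b} F" and "continuous_on {a..b} g" and "continuous_on {a..b} g'"
    and F: "\<And>x. x \<in> {a..b} \<Longrightarrow> (F has_vector_derivative f x) (at x within {a..b})"
    and g: "\<And>x. (g has_real_derivative g' x) (at x)"
  shows "((\<lambda>x. f x * g x) has_integral (F b * g b - F a * g a - integral {a..b} (\<lambda>x. F x * g' x))) {a..b}"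
proof (rule integration_by_parts_interior[OF bounded_bilinear_mult assms(1-3)])
  show "(F has_vector_derivative f x) (at x)" if "x \<in> {a<..<b}" for x
    using F[of x] that by (simp add: at_within_Icc_at)
  show "(g has_vector_derivative g' x) (at x)" for x
    using g by (simp add: has_real_derivative_iff_has_vector_derivative)
  have "((\<lambda>x. F x * g' x) has_integral integral {a..b} (\<lambda>x. F x * g' x)) {a..b}"
    using assms(2,4) by (intro integrable_integral integrable_continuous_interval continuous_intros)
  then show "((\<lambda>x. F x * g' x) has_integral
      (F b * g b - F a * g a - (F b * g b - F a * g a - integral {a..b} (\<lambda>x. F x * g' x)))) {a..b}"
    by simp
qed

lemma integral_deriv_mult_sin:
  assumes "0 < L" and "continuous_on {0..L} G"
    and "\<And>x. x \<in> {0..L} \<Longrightarrow> (G has_vector_derivative g x) (at x within {0..L})"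
  shows "integral {0..L} (\<lambda>x. g x * sin (real p * pi * x / L))
    = - (real p * pi / L) * integral {0..L} (\<lambda>x. G x * cos (real p * pi * x / L))"
proof -
  have "((\<lambda>x. sin (real p * pi * x / L)) has_real_derivative (real p * pi / L) * cos (real p * pi * x / L)) (at x)" for x
    using assms(1) by (auto intro!: derivative_eq_intros)
  then have "((\<lambda>x. g x * sin (real p * pi * x / L)) has_integral
      (G L * sin (real p * pi * L / L) - G 0 * sin (real p * pi * 0 / L)
        - integral {0..L} (\<lambda>x. G x * ((real p * pi / L) * cos (real p * pi * x / L))))) {0..L}"
    using assms by (intro has_integral_mult_by_parts) (auto intro!: continuous_intros)
  moreover have "sin (real p * pi * L / L) = 0" using assms(1) by simp
  ultimately show ?thesis
    by (simp add: integral_unique mult.left_commute[of "G _"])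
qed

lemma integral_deriv_mult_cos:
  assumes "0 < L" and "continuous_on {0..L} G"
    and "\<And>x. x \<in> {0..L} \<Longrightarrow> (G has_vector_derivative g x) (at x within {0..L})"
    and "G 0 = 0" and "G L = 0"
  shows "integral {0..L} (\<lambda>x. g x * cos (real p * pi * x / L))
    = (real p * pi / L) * integral {0..L} (\<lambda>x. G x * sin (real p * pi * x / L))"
proof -
  have "((\<lambda>x. cos (real p * pi * x / L)) has_real_derivative - (real p * pi / L) * sin (real p * pi * x / L)) (at x)" for x
    using assms(1) by (auto intro!: derivative_eq_intros)
  then have "((\<lambda>x. g x * cos (real p * pi * x / L)) has_integral
      (G L * cos (real p * pi * L / L) - G 0 * cos (real p * pi * 0 / L)
        - integral {0..L} (\<lambda>x. G x * (- (real p * pi / L) * sin (real p * pi * x / L))))) {0..L}"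
    using assms by (intro has_integral_mult_by_parts) (auto intro!: continuous_intros)
  then show ?thesis
    using assms(4,5) by (simp add: integral_unique mult.left_commute[of "G _"])
qed

lemma H6_derivs_eq_integral:
  assumes "H6_derivs L u0 g" and "k < 6" and "x \<in> {0..L}"
  shows "g k x = g k 0 + integral {0..x} (g (Suc k))"
proof -
  have "(g (Suc k) has_integral (g k x - g k 0)) {0..x}"
    using assms unfolding H6_derivs_def by blast
  then show ?thesis by (simp add: integral_unique)
qed

lemma H6_derivs_continuous_on:
  assumes "0 < L" and "H6_derivs L u0 g" and "k < 6"
  shows "continuous_on {0..L} (g k)"
proof -
  have "L \<in> {0..L}" using assms(1) by simp
  then have "(g (Suc k) has_integral (g k L - g k 0)) {0..L}"
    using assms(2,3) unfolding H6_derivs_def by blast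
  then have "continuous_on {0..L} (\<lambda>x. g k 0 + integral {0..x} (g (Suc k)))"
    by (intro continuous_on_add continuous_on_const indefinite_integral_continuous_1 has_integral_integrable)
  then show ?thesis
    by (rule continuous_on_eq) (rule H6_derivs_eq_integral[OF assms(2,3), symmetric])
qed

lemma H6_derivs_has_vector_derivative:
  assumes "0 < L" and "H6_derivs L u0 g" and "k < 5" and "x \<in> {0..L}"
  shows "(g k has_vector_derivative g (Suc k) x) (at x within {0..L})"
proof -
  have "continuous_on {0..L} (g (Suc k))"
    using assms(3) by (intro H6_derivs_continuous_on[OF assms(1,2)]) simp
  then have "((\<lambda>y. g k 0 + integral {0..y} (g (Suc k))) has_vector_derivative (0 + g (Suc k) x))
      (at x within {0..L})"
    by (intro has_vector_derivative_add has_vector_derivative_const integral_has_vector_derivative assms(4))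
  then have deriv: "((\<lambda>y. g k 0 + integral {0..y} (g (Suc k))) has_vector_derivative g (Suc k) x)
      (at x within {0..L})"
    by simp
  have eq: "g k y = g k 0 + integral {0..y} (g (Suc k))" if "y \<in> {0..L}" for y
    using assms(3) that by (intro H6_derivs_eq_integral[OF assms(2)]) auto
  show ?thesis
    by (rule has_vector_derivative_transform[OF assms(4) eq deriv])
qed

text \<open>Five integrations by parts, alternating between cosine and sine: the sine steps have no
  boundary terms, the cosine steps use the Neumann conditions on $u^{(1)}$ and $u^{(3)}$. Afterwards
  only the continuity of $u^{(5)}$ is needed.\<close>

lemma abs_alpha_mult_pow4_eq:
  assumes L: "0 < L" and H: "H6_derivs L u0 g" and bc: "g 1 0 = 0" "g 1 L = 0" "g 3 0 = 0" "g 3 L = 0"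
    and p: "0 < p"
  shows "\<bar>alpha L u0 p\<bar> * real p ^ 4
    = sqrt 2 * L ^ 4 / pi ^ 5 * (\<bar>integral {0..L} (\<lambda>x. g 5 x * sin (real p * pi * x / L))\<bar> / real p)"
proof -
  define w where "w = real p * pi / L"
  define C where "C k = integral {0..L} (\<lambda>x. g k x * cos (real p * pi * x / L))" for k
  define S where "S k = integral {0..L} (\<lambda>x. g k x * sin (real p * pi * x / L))" for k
  have sin_step: "S (Suc k) = - w * C k" if "k < 5" for k
    unfolding S_def C_def w_def using that H6_derivs_continuous_on[OF L H, of k]
    by (intro integral_deriv_mult_sin[OF L] H6_derivs_has_vector_derivative[OF L H]) auto
  have cos_step: "C (Suc k) = w * S k" if "k < 5" "g k 0 = 0" "g k L = 0" for k
    unfolding S_def C_def w_def using that H6_derivs_continuous_on[OF L H, of k]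
    by (intro integral_deriv_mult_cos[OF L] H6_derivs_has_vector_derivative[OF L H]) auto
  have "S 5 = - (w ^ 5 * C 0)"
    using sin_step[of 4] cos_step[of 3] sin_step[of 2] cos_step[of 1] sin_step[of 0] bc
    by (simp add: numeral_eq_Suc power_def)
  moreover have "alpha L u0 p = sqrt 2 / L * C 0"
  proof -
    have "integral {0..L} (\<lambda>x. u0 x * cfun L p x) = integral {0..L} (\<lambda>x. sqrt 2 * (g 0 x * cos (real p * pi * x / L)))"
      using H p by (intro integral_cong) (simp add: H6_derivs_def cfun_def)
    then show ?thesis unfolding alpha_def C_def by simp
  qed
  moreover have "0 < w" using L p by (simp add: w_def)
  ultimately have "\<bar>alpha L u0 p\<bar> * real p ^ 4 = sqrt 2 / L * (\<bar>S 5\<bar> / w ^ 5) * real p ^ 4"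
    using L by (simp add: abs_mult)
  also have "\<dots> = sqrt 2 * L ^ 4 / pi ^ 5 * (\<bar>S 5\<bar> / real p)"
    unfolding w_def using L p by (simp add: field_simps power_divide power_mult_distrib eval_nat_numeral)
  finally show ?thesis by (simp add: S_def)
qed

lemma summable_alpha_pow4:
  assumes L: "0 < L" and "admissible_data L u0"
  shows "summable (\<lambda>p. \<bar>alpha L u0 p\<bar> * real p ^ 4)"
proof -
  obtain g where H: "H6_derivs L u0 g" and bc: "g 1 0 = 0" "g 1 L = 0" "g 3 0 = 0" "g 3 L = 0"
    using assms(2) unfolding admissible_data_def by blast
  define \<beta> where "\<beta> p = integral {0..L} (\<lambda>x. g 5 x * sin (real p * pi * x / L))" for p
  define K where "K = sqrt 2 * L ^ 4 / pi ^ 5"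
  have "0 \<le> K" using L by (simp add: K_def)
  have "summable (\<lambda>p. (\<beta> p)\<^sup>2)"
  proof (rule bounded_imp_summable)
    fix n
    have orth: "((\<lambda>x. sin (real p * pi * x / L) * sin (real q * pi * x / L)) has_integral
        (if p = q then L / 2 else 0)) {0..L}" if "p \<in> {1..n}" "q \<in> {1..n}" for p q
      using that by (intro has_integral_sin_mult_sin[OF L]) auto
    have "(\<Sum>p\<in>{1..n}. (\<beta> p)\<^sup>2) \<le> L / 2 * integral {0..L} (\<lambda>x. (g 5 x)\<^sup>2)"
      unfolding \<beta>_def using L H6_derivs_continuous_on[OF L H, of 5]
      by (intro bessel_inequality_integral[OF _ _ _ _ orth]) (auto intro!: continuous_intros)
    moreover have "{..n} = insert 0 {1..n}" by auto
    ultimately show "(\<Sum>p\<le>n. (\<beta> p)\<^sup>2) \<le> L / 2 * integral {0..L} (\<lambda>x. (g 5 x)\<^sup>2)"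
      by (simp add: \<beta>_def)
  qed simp
  then have "summable (\<lambda>p. K / 2 * ((\<beta> p)\<^sup>2 + inverse (real p ^ 2)))"
    using inverse_power_summable[of 2] by (intro summable_mult summable_add) auto
  then show ?thesis
  proof (rule summable_comparison_test')
    fix p :: nat
    show "norm (\<bar>alpha L u0 p\<bar> * real p ^ 4) \<le> K / 2 * ((\<beta> p)\<^sup>2 + inverse (real p ^ 2))"
    proof (cases "p = 0")
      case False
      have "\<bar>alpha L u0 p\<bar> * real p ^ 4 = K * (\<bar>\<beta> p\<bar> * inverse (real p))"
        using abs_alpha_mult_pow4_eq[OF L H bc] False by (simp add: K_def \<beta>_def divide_inverse)
      also have "\<dots> \<le> K * (((\<beta> p)\<^sup>2 + inverse (real p ^ 2)) / 2)"
        using sum_squares_bound[of "\<bar>\<beta> p\<bar>" "inverse (real p)"] \<open>0 \<le> K\<close>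
        by (intro mult_left_mono) (simp_all add: power_inverse)
      finally show ?thesis by simp
    qed (use \<open>0 \<le> K\<close> in simp)
  qed
qed

theorem proposition3p7:
  fixes L :: real
  assumes "L > 0"
  shows "\<exists>C>0. \<forall>(u0::real \<Rightarrow> real) (dt::real) (J::nat) (n::nat).
     admissible_data L u0 \<and> 0 < dt \<and> dt < 1 \<and> J \<ge> 2 \<and> dt / (dx L J)\<^sup>2 \<le> 1 / 2 \<and> n \<ge> 1
     \<longrightarrow> l2norm J (\<lambda>j. dt * (\<Sum>k<n. (scheme_op L J dt ^^ (n - 1 - k))
                                 (Ldelta L J (sol L u0 (real k * dt))) j))
         \<le> C * dx L J * (\<Sum>p. \<bar>alpha L u0 (Suc p)\<bar> * real (Suc p) ^ 4)"
proof (intro exI[of _ "mode_error_const L"] conjI allI impI)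
  show "0 < mode_error_const L"
    using assms by (rule mode_error_const_pos)
  fix u0 :: "real \<Rightarrow> real" and dt :: real and J n :: nat
  assume H: "admissible_data L u0 \<and> 0 < dt \<and> dt < 1 \<and> J \<ge> 2 \<and> dt / (dx L J)\<^sup>2 \<le> 1 / 2 \<and> n \<ge> 1"
  then have \<alpha>: "summable (\<lambda>p. \<bar>alpha L u0 p\<bar> * real p ^ 4)"
    using summable_alpha_pow4[OF assms] by blast
  have "(\<Sum>p. \<bar>alpha L u0 (Suc p)\<bar> * real (Suc p) ^ 4) = (\<Sum>p. \<bar>alpha L u0 p\<bar> * real p ^ 4)"
    using suminf_split_head[OF \<alpha>] by simp
  then show "l2norm J (\<lambda>j. dt * (\<Sum>k<n. (scheme_op L J dt ^^ (n - 1 - k)) (Ldelta L J (sol L u0 (real k * dt))) j))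
      \<le> mode_error_const L * dx L J * (\<Sum>p. \<bar>alpha L u0 (Suc p)\<bar> * real (Suc p) ^ 4)"
    using l2norm_duhamel_Ldelta_sol_le[OF assms _ _ _ _ _ \<alpha>, of J dt n] H
    unfolding duhamel_def by auto
qed

end
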